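(* Let $C\subset\mathbb{C}$. Then $C$ is disconnected if and only if there is a closed connected set $A\subset\mathbb{C}$ that disconnects $C$.
   Context: A set $A\subset\mathbb{C}$ disconnects $C\subset\mathbb{C}$ if $C\cap A=\emptyset$ and at least two different connected components of $\mathbb{C}\setminus A$ intersect $C$. *)

theory Defs
  imports "HOL-Analysis.Analysis"
begin

definition disconnects :: "complex set \<Rightarrow> complex set \<Rightarrow> bool" where
  "disconnects A C \<longleftrightarrow> C \<inter> A = {} \<and>
     (\<exists>S T. S \<in> components (- A) \<and> T \<in> components (- A) \<and> S \<noteq> T \<and>
            S \<inter> C \<noteq> {} \<and> T \<inter> C \<noteq> {})"

end

theory Submission
  imports Defs
begin

(* The definition of "A disconnects C" talks about components of -A meeting C;
   we first restate it pointwise: C misses A and two points of C lie in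
   different components of -A.  In this form the easy direction is immediate,
   since a connected C avoiding A lies inside a single component of -A.

   For the converse, a disconnected C splits into two nonempty relatively
   closed pieces; these are separated, so they lie in disjoint open sets U, V.
   The closed set S = -(U \<union> V) misses C and separates a point of one piece
   from a point of the other.  Finally, in Euclidean space two points separated
   by a closed set S are already separated by a single component K of S
   (a library result); K is closed, connected and still misses C. *)

lemma disconnects_iff_points:
  "disconnects A C \<longleftrightarrow>
     C \<inter> A = {} \<and> (\<exists>a\<in>C. \<exists>b\<in>C. \<not> connected_component (- A) a b)"
proof
  assume "disconnects A C"
  then obtain S T where CA: "C \<inter> A = {}" and S: "S \<in> components (- A)"
    and T: "T \<in> components (- A)" and "S \<noteq> T"
    and "S \<inter> C \<noteq> {}" "T \<inter> C \<noteq> {}"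
    unfolding disconnects_def by blast
  then obtain a b where a: "a \<in> S" "a \<in> C" and b: "b \<in> T" "b \<in> C" by blast
  have "\<not> connected_component (- A) a b"
  proof
    assume "connected_component (- A) a b"
    then have "b \<in> connected_component_set (- A) a" by simp
    also have "connected_component_set (- A) a = S"
      using S a(1) by (metis components_iff connected_component_eq mem_Collect_eq)
    finally show False
      using b(1) S T \<open>S \<noteq> T\<close> components_eq by blast
  qed
  with CA a b show "C \<inter> A = {} \<and> (\<exists>a\<in>C. \<exists>b\<in>C. \<not> connected_component (- A) a b)"
    by blast
next
  assume "C \<inter> A = {} \<and> (\<exists>a\<in>C. \<exists>b\<in>C. \<not> connected_component (- A) a b)"
  then obtain a b where CA: "C \<inter> A = {}" and ab: "a \<in> C" "b \<in> C"
    and sep: "\<not> connected_component (- A) a b" by blast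
  have aA: "a \<in> - A" and bA: "b \<in> - A" using CA ab by blast+
  show "disconnects A C"
    unfolding disconnects_def
  proof (intro conjI exI)
    show "connected_component_set (- A) a \<in> components (- A)"
      "connected_component_set (- A) b \<in> components (- A)"
      using aA bA by (simp_all add: componentsI)
    show "connected_component_set (- A) a \<noteq> connected_component_set (- A) b"
      using sep aA by (metis connected_component_eq_eq)
    show "connected_component_set (- A) a \<inter> C \<noteq> {}"
      "connected_component_set (- A) b \<inter> C \<noteq> {}"
      using aA bA ab connected_component_refl_eq by blast+
  qed (fact CA)
qed

lemma connected_not_disconnects:
  assumes "connected C"
  shows "\<not> disconnects A C"
proof
  assume "disconnects A C"
  then obtain a b where "C \<inter> A = {}" "a \<in> C" "b \<in> C"
    and sep: "\<not> connected_component (- A) a b"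
    unfolding disconnects_iff_points by blast
  then have "connected_component (- A) a b"
    using assms unfolding connected_component_def by blast
  with sep show False ..
qed

text \<open>The two pieces of \<open>C\<close> are separated, hence contained in
  disjoint open sets, whose joint complement is the separating closed set.\<close>

lemma disconnected_separated_by_closed:
  fixes C :: "'a::euclidean_space set"
  assumes "\<not> connected C"
  obtains S a b where "closed S" "C \<inter> S = {}" "a \<in> C" "b \<in> C"
    "\<not> connected_component (- S) a b"
proof -
  obtain E1 E2 where E1: "closedin (top_of_set C) E1" and E2: "closedin (top_of_set C) E2"
    and U: "E1 \<union> E2 = C" and D: "E1 \<inter> E2 = {}" and "E1 \<noteq> {}" "E2 \<noteq> {}"
    using assms unfolding connected_closedin_eq by blast
  then obtain a b where a: "a \<in> E1" and b: "b \<in> E2" by blast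
  obtain F1 where F1: "closed F1" "E1 = C \<inter> F1" using E1 closedin_closed by blast
  obtain F2 where F2: "closed F2" "E2 = C \<inter> F2" using E2 closedin_closed by blast
  have "closure E1 \<subseteq> F1" "closure E2 \<subseteq> F2"
    using F1 F2 by (simp_all add: closure_minimal)
  then have "E1 \<inter> closure E2 = {}" "E2 \<inter> closure E1 = {}"
    using F1 F2 D U by blast+
  then obtain V W where VW: "V \<inter> W = {}" "open V" "open W" "E1 \<subseteq> V" "E2 \<subseteq> W"
    by (rule separation_closures)
  define S where "S = - (V \<union> W)"
  have "\<not> connected_component (- S) a b"
  proof
    assume "connected_component (- S) a b"
    then obtain T where T: "connected T" "T \<subseteq> V \<union> W" "a \<in> T" "b \<in> T"
      unfolding connected_component_def S_def by blast
    then have "V \<inter> T = {} \<or> W \<inter> T = {}"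
      using connectedD[OF T(1) VW(2,3)] VW(1) by blast
    then show False using T a b VW by blast
  qed
  moreover have "closed S" "C \<inter> S = {}"
    using VW U unfolding S_def by auto
  ultimately show thesis
    using that a b U by blast
qed

lemma separated_by_closed_connected_subset:
  fixes S :: "'a::euclidean_space set"
  assumes "closed S" "\<not> connected_component (- S) a b"
  obtains K where "closed K" "connected K" "K \<subseteq> S"
    "\<not> connected_component (- K) a b"
proof -
  obtain K where K: "K \<in> components S" "\<not> connected_component (- K) a b"
    using separation_by_component_closed_pointwise[OF assms] by blast
  show thesis
    using that closed_components[OF assms(1) K(1)] in_components_connected[OF K(1)]
      in_components_subset[OF K(1)] K(2) by blast
qed

theorem lemma3p1:
  fixes C :: "complex set"
  shows "\<not> connected C \<longleftrightarrow> (\<exists>A::complex set. closed A \<and> connected A \<and> disconnects A C)"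
proof
  assume "\<not> connected C"
  then obtain S a b where "closed S" "C \<inter> S = {}" "a \<in> C" "b \<in> C"
    and sep: "\<not> connected_component (- S) a b"
    by (rule disconnected_separated_by_closed)
  moreover obtain K where "closed K" "connected K" "K \<subseteq> S"
    "\<not> connected_component (- K) a b"
    using separated_by_closed_connected_subset[OF \<open>closed S\<close> sep] .
  ultimately show "\<exists>A. closed A \<and> connected A \<and> disconnects A C"
    unfolding disconnects_iff_points by blast
next
  assume "\<exists>A. closed A \<and> connected A \<and> disconnects A C"
  then show "\<not> connected C"
    using connected_not_disconnects by blast
qed

end
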